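(* Let $A=[a_1,\dots,a_N]$ and $B=[b_1,\dots,b_N]$ be $N\times N$ complex matrices, $\theta$ a real parameter, and $m_k(\theta)=(1-\theta)a_k+\theta b_k$ the $k$-th column of $(1-\theta)A+\theta B$. Define recursively $z_1=v_1=m_1$ and, for $k\ge2$, \[ v_k=m_k-\sum_{j=1}^{k-1}\frac{\langle z_j,m_k\rangle}{\|z_j\|^2}\,z_j,\qquad z_k=\Big(\prod_{j=1}^{k-1}\|z_j\|^2\Big)\Big\{m_k-\sum_{j=1}^{k-1}\frac{\langle z_j,m_k\rangle z_j}{\|z_j\|^2}\Big\}. \] Then for each $k\in\{1,\dots,N\}$, $z_k$ equals $v_k$ multiplied by a polynomial in $\theta$ of degree at most $D_k=3^{k-1}-1$ (its denominator), and every entry of $z_k(\theta)$ is a polynomial in $\theta$ of degree at most $D_k+1=3^{k-1}$.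
   Context: $\langle x,y\rangle=\sum_i\overline{x_i}y_i$ is the standard inner product on $\mathbb{C}^N$ and $\|x\|^2=\langle x,x\rangle$; for real $\theta$ these are polynomials in $\theta$ with complex coefficients. *)

theory Defs
  imports "HOL-Computational_Algebra.Polynomial" Complex_Main
begin

text \<open>Vectors of \<open>\<complex>^N\<close> are functions \<open>nat \<Rightarrow> complex\<close>, components indexed by \<open>{1..N}\<close>.
  An \<open>N\<times>N\<close> matrix \<open>A\<close> is \<open>nat \<Rightarrow> nat \<Rightarrow> complex\<close>, entry \<open>A i k\<close> = row i, column k (1-based).\<close>

definition cinner :: "nat \<Rightarrow> (nat \<Rightarrow> complex) \<Rightarrow> (nat \<Rightarrow> complex) \<Rightarrow> complex" where
  "cinner N x y = (\<Sum>i\<in>{1..N}. cnj (x i) * y i)"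

definition cnorm2 :: "nat \<Rightarrow> (nat \<Rightarrow> complex) \<Rightarrow> complex" where
  "cnorm2 N x = cinner N x x"

definition mcol :: "(nat \<Rightarrow> nat \<Rightarrow> complex) \<Rightarrow> (nat \<Rightarrow> nat \<Rightarrow> complex) \<Rightarrow> nat \<Rightarrow> real \<Rightarrow> (nat \<Rightarrow> complex)" where
  "mcol A B k \<theta> = (\<lambda>i. (1 - complex_of_real \<theta>) * A i k + complex_of_real \<theta> * B i k)"

function zvec :: "nat \<Rightarrow> (nat \<Rightarrow> nat \<Rightarrow> complex) \<Rightarrow> (nat \<Rightarrow> nat \<Rightarrow> complex) \<Rightarrow> nat \<Rightarrow> real \<Rightarrow> (nat \<Rightarrow> complex)" where
  "zvec N A B k \<theta> = (\<lambda>i. (\<Prod>j\<in>{1..<k}. cnorm2 N (zvec N A B j \<theta>)) *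
      (mcol A B k \<theta> i - (\<Sum>j\<in>{1..<k}. cinner N (zvec N A B j \<theta>) (mcol A B k \<theta>)
                          / cnorm2 N (zvec N A B j \<theta>) * zvec N A B j \<theta> i)))"
  by pat_completeness auto
termination by (relation "measure (\<lambda>(N,A,B,k,\<theta>). k)") auto

definition vvec :: "nat \<Rightarrow> (nat \<Rightarrow> nat \<Rightarrow> complex) \<Rightarrow> (nat \<Rightarrow> nat \<Rightarrow> complex) \<Rightarrow> nat \<Rightarrow> real \<Rightarrow> (nat \<Rightarrow> complex)" where
  "vvec N A B k \<theta> = (\<lambda>i. mcol A B k \<theta> i - (\<Sum>j\<in>{1..<k}. cinner N (zvec N A B j \<theta>) (mcol A B k \<theta>)
                          / cnorm2 N (zvec N A B j \<theta>) * zvec N A B j \<theta> i))"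

end

theory Submission
  imports Defs
begin

text \<open>Write \<open>P\<^sub>k = \<Prod>\<^sub>j\<^sub><\<^sub>k \<parallel>z\<^sub>j\<parallel>\<^sup>2\<close>. Multiplying the bracket that defines \<open>z\<^sub>k\<close> by \<open>P\<^sub>k\<close> clears
  every denominator: the \<open>j\<close>-th summand becomes \<open>(\<Prod>\<^sub>l\<^sub>\<noteq>\<^sub>j \<parallel>z\<^sub>l\<parallel>\<^sup>2) \<langle>z\<^sub>j,m\<^sub>k\<rangle> z\<^sub>j\<close>, also when
  \<open>\<parallel>z\<^sub>j\<parallel>\<^sup>2 = 0\<close> (then \<open>z\<^sub>j = 0\<close>, and HOL's quotient by zero is zero). By strong induction
  on \<open>k\<close>, the entries of \<open>z\<^sub>k\<close> are then polynomials in \<open>\<theta>\<close> of degree at most \<open>3\<^sup>k\<^sup>-\<^sup>1\<close>: each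
  \<open>\<parallel>z\<^sub>j\<parallel>\<^sup>2\<close> has degree at most \<open>2\<cdot>3\<^sup>j\<^sup>-\<^sup>1\<close>, so \<open>P\<^sub>k\<close> has degree at most \<open>\<Sum>\<^sub>j\<^sub><\<^sub>k 2\<cdot>3\<^sup>j\<^sup>-\<^sup>1 = 3\<^sup>k\<^sup>-\<^sup>1 - 1\<close>,
  and the linear factor \<open>m\<^sub>k\<close>, resp. \<open>\<langle>z\<^sub>j,m\<^sub>k\<rangle> z\<^sub>j\<close> in place of \<open>\<parallel>z\<^sub>j\<parallel>\<^sup>2\<close>, adds exactly one more.\<close>

declare zvec.simps[simp del]

definition poly_fun_le :: "nat \<Rightarrow> (real \<Rightarrow> complex) \<Rightarrow> bool" where
  "poly_fun_le d f \<longleftrightarrow> (\<exists>q::complex poly. degree q \<le> d \<and> (\<forall>\<theta>. f \<theta> = poly q (complex_of_real \<theta>)))"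

lemma poly_fun_le_const: "poly_fun_le d (\<lambda>_. c)"
  unfolding poly_fun_le_def by (rule exI[of _ "[:c:]"]) simp

lemma poly_fun_le_of_real: "poly_fun_le 1 complex_of_real"
  unfolding poly_fun_le_def by (rule exI[of _ "[:0, 1:]"]) simp

lemma poly_fun_le_add:
  assumes "poly_fun_le d f" and "poly_fun_le d g"
  shows "poly_fun_le d (\<lambda>\<theta>. f \<theta> + g \<theta>)"
proof -
  obtain p q where "degree p \<le> d" "degree q \<le> d"
    and "\<forall>\<theta>. f \<theta> = poly p (complex_of_real \<theta>)" "\<forall>\<theta>. g \<theta> = poly q (complex_of_real \<theta>)"
    using assms unfolding poly_fun_le_def by blast
  then show ?thesis
    unfolding poly_fun_le_def by (intro exI[of _ "p + q"]) (simp add: degree_add_le)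
qed

lemma poly_fun_le_diff:
  assumes "poly_fun_le d f" and "poly_fun_le d g"
  shows "poly_fun_le d (\<lambda>\<theta>. f \<theta> - g \<theta>)"
proof -
  obtain p q where "degree p \<le> d" "degree q \<le> d"
    and "\<forall>\<theta>. f \<theta> = poly p (complex_of_real \<theta>)" "\<forall>\<theta>. g \<theta> = poly q (complex_of_real \<theta>)"
    using assms unfolding poly_fun_le_def by blast
  then show ?thesis
    unfolding poly_fun_le_def by (intro exI[of _ "p - q"]) (simp add: degree_diff_le)
qed

lemma poly_fun_le_mult:
  assumes "poly_fun_le d f" and "poly_fun_le e g"
  shows "poly_fun_le (d + e) (\<lambda>\<theta>. f \<theta> * g \<theta>)"
proof -
  obtain p q where "degree p \<le> d" "degree q \<le> e"
    and "\<forall>\<theta>. f \<theta> = poly p (complex_of_real \<theta>)" "\<forall>\<theta>. g \<theta> = poly q (complex_of_real \<theta>)"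
    using assms unfolding poly_fun_le_def by blast
  then show ?thesis
    unfolding poly_fun_le_def
    by (intro exI[of _ "p * q"]) (simp add: order_trans[OF degree_mult_le] add_mono)
qed

lemma poly_fun_le_cnj:
  assumes "poly_fun_le d f"
  shows "poly_fun_le d (\<lambda>\<theta>. cnj (f \<theta>))"
proof -
  obtain p where "degree p \<le> d" "\<forall>\<theta>. f \<theta> = poly p (complex_of_real \<theta>)"
    using assms unfolding poly_fun_le_def by blast
  then show ?thesis
    unfolding poly_fun_le_def by (intro exI[of _ "map_poly cnj p"]) (simp add: degree_map_poly)
qed

lemma poly_fun_le_sum:
  "finite S \<Longrightarrow> (\<And>x. x \<in> S \<Longrightarrow> poly_fun_le d (f x)) \<Longrightarrow> poly_fun_le d (\<lambda>\<theta>. \<Sum>x\<in>S. f x \<theta>)"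
proof (induction S rule: finite_induct)
  case empty
  then show ?case using poly_fun_le_const[of d 0] by simp
next
  case (insert x F)
  then show ?case using poly_fun_le_add[of d "f x" "\<lambda>\<theta>. \<Sum>x\<in>F. f x \<theta>"] by simp
qed

lemma poly_fun_le_prod:
  "finite S \<Longrightarrow> (\<And>x. x \<in> S \<Longrightarrow> poly_fun_le (d x) (f x))
    \<Longrightarrow> poly_fun_le (\<Sum>x\<in>S. d x) (\<lambda>\<theta>. \<Prod>x\<in>S. f x \<theta>)"
proof (induction S rule: finite_induct)
  case empty
  then show ?case using poly_fun_le_const[of 0 1] by simp
next
  case (insert x F)
  then show ?case
    using poly_fun_le_mult[of "d x" "f x" "\<Sum>x\<in>F. d x" "\<lambda>\<theta>. \<Prod>x\<in>F. f x \<theta>"] by simp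
qed

lemma poly_fun_le_cinner:
  assumes "\<And>i. i \<in> {1..N} \<Longrightarrow> poly_fun_le d (\<lambda>\<theta>. x \<theta> i)"
    and "\<And>i. i \<in> {1..N} \<Longrightarrow> poly_fun_le e (\<lambda>\<theta>. y \<theta> i)"
  shows "poly_fun_le (d + e) (\<lambda>\<theta>. cinner N (x \<theta>) (y \<theta>))"
  unfolding cinner_def using assms by (intro poly_fun_le_sum poly_fun_le_mult poly_fun_le_cnj) auto

lemma poly_fun_le_cnorm2:
  assumes "\<And>i. i \<in> {1..N} \<Longrightarrow> poly_fun_le d (\<lambda>\<theta>. x \<theta> i)"
  shows "poly_fun_le (2 * d) (\<lambda>\<theta>. cnorm2 N (x \<theta>))"
  unfolding cnorm2_def mult_2 using assms by (intro poly_fun_le_cinner)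

lemma poly_fun_le_mcol: "poly_fun_le 1 (\<lambda>\<theta>. mcol A B k \<theta> i)"
proof -
  have "mcol A B k \<theta> i = A i k + complex_of_real \<theta> * (B i k - A i k)" for \<theta>
    unfolding mcol_def by (simp add: algebra_simps)
  moreover have "poly_fun_le 1 (\<lambda>\<theta>. A i k + complex_of_real \<theta> * (B i k - A i k))"
    using poly_fun_le_add[OF poly_fun_le_const poly_fun_le_mult[OF poly_fun_le_of_real poly_fun_le_const]]
    by simp
  ultimately show ?thesis by simp
qed

lemma cinner_eq_0_if_cnorm2_eq_0:
  assumes "cnorm2 N x = 0"
  shows "cinner N x y = 0"
proof -
  have "cnorm2 N x = complex_of_real (\<Sum>i\<in>{1..N}. (cmod (x i))\<^sup>2)"
    unfolding cnorm2_def cinner_def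
    by (simp only: of_real_sum complex_norm_square mult.commute[of "cnj _"])
  then have "(\<Sum>i\<in>{1..N}. (cmod (x i))\<^sup>2) = 0"
    using assms by (metis of_real_eq_0_iff)
  then have "x i = 0" if "i \<in> {1..N}" for i
    using that by (subst (asm) sum_nonneg_eq_0_iff) auto
  then show ?thesis
    unfolding cinner_def by simp
qed

lemma prod_mult_divide_cancel:
  fixes n :: "'a \<Rightarrow> 'b::field"
  assumes "finite S" and "j \<in> S" and "n j = 0 \<Longrightarrow> c = 0"
  shows "(\<Prod>l\<in>S. n l) * (c / n j) = (\<Prod>l\<in>S - {j}. n l) * c"
proof (cases "n j = 0")
  case False
  then show ?thesis
    using assms(1,2) by (simp add: prod.remove field_simps)
qed (use assms(3) in simp)

lemma sum_two_times_pow3: "(\<Sum>j\<in>{1..<k}. 2 * 3 ^ (j - 1) :: nat) = 3 ^ (k - 1) - 1"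
proof (induction k)
  case (Suc k)
  show ?case
  proof (cases "k = 0")
    case False
    then have "{1..<Suc k} = insert k {1..<k}" by auto
    with Suc False show ?thesis by (cases k) simp_all
  qed simp
qed simp

lemma zvec_eq_prod_vvec:
  "zvec N A B k \<theta> i = (\<Prod>j\<in>{1..<k}. cnorm2 N (zvec N A B j \<theta>)) * vvec N A B k \<theta> i"
  by (subst zvec.simps) (simp add: vvec_def)

lemma zvec_eq_division_free:
  "zvec N A B k \<theta> i = (\<Prod>j\<in>{1..<k}. cnorm2 N (zvec N A B j \<theta>)) * mcol A B k \<theta> i
     - (\<Sum>j\<in>{1..<k}. (\<Prod>l\<in>{1..<k} - {j}. cnorm2 N (zvec N A B l \<theta>))
          * cinner N (zvec N A B j \<theta>) (mcol A B k \<theta>) * zvec N A B j \<theta> i)"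
proof -
  let ?n = "\<lambda>j. cnorm2 N (zvec N A B j \<theta>)"
  let ?c = "\<lambda>j. cinner N (zvec N A B j \<theta>) (mcol A B k \<theta>)"
  have "(\<Prod>l\<in>{1..<k}. ?n l) * (?c j / ?n j * zvec N A B j \<theta> i)
      = (\<Prod>l\<in>{1..<k} - {j}. ?n l) * ?c j * zvec N A B j \<theta> i"
    if "j \<in> {1..<k}" for j
  proof -
    have "(\<Prod>l\<in>{1..<k}. ?n l) * (?c j / ?n j) = (\<Prod>l\<in>{1..<k} - {j}. ?n l) * ?c j"
      using that by (intro prod_mult_divide_cancel) (auto intro: cinner_eq_0_if_cnorm2_eq_0)
    then show ?thesis by (metis mult.assoc)
  qed
  then have "(\<Sum>j\<in>{1..<k}. (\<Prod>l\<in>{1..<k}. ?n l) * (?c j / ?n j * zvec N A B j \<theta> i))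
      = (\<Sum>j\<in>{1..<k}. (\<Prod>l\<in>{1..<k} - {j}. ?n l) * ?c j * zvec N A B j \<theta> i)"
    by (rule sum.cong[OF refl])
  then show ?thesis
    unfolding zvec.simps[of N A B k] right_diff_distrib sum_distrib_left by simp
qed

lemma poly_fun_le_zvec: "poly_fun_le (3 ^ (k - 1)) (\<lambda>\<theta>. zvec N A B k \<theta> i)"
proof (induction k arbitrary: i rule: less_induct)
  case (less k)
  let ?S = "{1..<k}"
  have norm: "poly_fun_le (2 * 3 ^ (j - 1)) (\<lambda>\<theta>. cnorm2 N (zvec N A B j \<theta>))" if "j \<in> ?S" for j
    using that by (intro poly_fun_le_cnorm2 less) auto
  have "poly_fun_le ((\<Sum>j\<in>?S. 2 * 3 ^ (j - 1)) + 1)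
      (\<lambda>\<theta>. (\<Prod>j\<in>?S. cnorm2 N (zvec N A B j \<theta>)) * mcol A B k \<theta> i)"
    by (intro poly_fun_le_mult poly_fun_le_prod poly_fun_le_mcol norm) auto
  then have main: "poly_fun_le (3 ^ (k - 1))
      (\<lambda>\<theta>. (\<Prod>j\<in>?S. cnorm2 N (zvec N A B j \<theta>)) * mcol A B k \<theta> i)"
    unfolding sum_two_times_pow3 by simp
  have summand: "poly_fun_le (3 ^ (k - 1)) (\<lambda>\<theta>. (\<Prod>l\<in>?S - {j}. cnorm2 N (zvec N A B l \<theta>))
      * cinner N (zvec N A B j \<theta>) (mcol A B k \<theta>) * zvec N A B j \<theta> i)" if j: "j \<in> ?S" for j
  proof -
    have "poly_fun_le ((\<Sum>l\<in>?S - {j}. 2 * 3 ^ (l - 1)) + (3 ^ (j - 1) + 1) + 3 ^ (j - 1))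
        (\<lambda>\<theta>. (\<Prod>l\<in>?S - {j}. cnorm2 N (zvec N A B l \<theta>))
          * cinner N (zvec N A B j \<theta>) (mcol A B k \<theta>) * zvec N A B j \<theta> i)"
      using j by (intro poly_fun_le_mult poly_fun_le_prod poly_fun_le_cinner poly_fun_le_mcol norm less) auto
    moreover have "(\<Sum>l\<in>?S - {j}. 2 * 3 ^ (l - 1)) + (3 ^ (j - 1) + 1) + 3 ^ (j - 1) = (3 ^ (k - 1) :: nat)"
    proof -
      have "(\<Sum>l\<in>?S. 2 * 3 ^ (l - 1) :: nat) = 2 * 3 ^ (j - 1) + (\<Sum>l\<in>?S - {j}. 2 * 3 ^ (l - 1))"
        using j by (simp add: sum.remove)
      moreover have "(1 :: nat) \<le> 3 ^ (k - 1)" by simp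
      ultimately show ?thesis unfolding sum_two_times_pow3 by linarith
    qed
    ultimately show ?thesis by simp
  qed
  have "poly_fun_le (3 ^ (k - 1)) (\<lambda>\<theta>. (\<Prod>j\<in>?S. cnorm2 N (zvec N A B j \<theta>)) * mcol A B k \<theta> i
      - (\<Sum>j\<in>?S. (\<Prod>l\<in>?S - {j}. cnorm2 N (zvec N A B l \<theta>))
          * cinner N (zvec N A B j \<theta>) (mcol A B k \<theta>) * zvec N A B j \<theta> i))"
    by (intro poly_fun_le_diff main poly_fun_le_sum summand) auto
  then show ?case
    by (subst zvec_eq_division_free) simp
qed

theorem corollary6:
  fixes N :: nat and A B :: "nat \<Rightarrow> nat \<Rightarrow> complex" and k :: nat
  assumes "1 \<le> k" and "k \<le> N"
  shows "(\<exists>p :: complex poly. degree p \<le> 3 ^ (k - 1) - 1 \<and>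
            (\<forall>\<theta>::real. poly p (complex_of_real \<theta>) = (\<Prod>j\<in>{1..<k}. cnorm2 N (zvec N A B j \<theta>)) \<and>
                        (\<forall>i. zvec N A B k \<theta> i = poly p (complex_of_real \<theta>) * vvec N A B k \<theta> i)))
       \<and> (\<forall>i\<in>{1..N}. \<exists>q :: complex poly. degree q \<le> 3 ^ (k - 1) \<and>
            (\<forall>\<theta>::real. zvec N A B k \<theta> i = poly q (complex_of_real \<theta>)))"
proof
  have "poly_fun_le (\<Sum>j\<in>{1..<k}. 2 * 3 ^ (j - 1)) (\<lambda>\<theta>. \<Prod>j\<in>{1..<k}. cnorm2 N (zvec N A B j \<theta>))"
    by (intro poly_fun_le_prod poly_fun_le_cnorm2 poly_fun_le_zvec) auto
  then obtain p where "degree p \<le> 3 ^ (k - 1) - 1"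
    and "\<forall>\<theta>. (\<Prod>j\<in>{1..<k}. cnorm2 N (zvec N A B j \<theta>)) = poly p (complex_of_real \<theta>)"
    unfolding poly_fun_le_def sum_two_times_pow3 by blast
  then show "\<exists>p :: complex poly. degree p \<le> 3 ^ (k - 1) - 1 \<and>
            (\<forall>\<theta>::real. poly p (complex_of_real \<theta>) = (\<Prod>j\<in>{1..<k}. cnorm2 N (zvec N A B j \<theta>)) \<and>
                        (\<forall>i. zvec N A B k \<theta> i = poly p (complex_of_real \<theta>) * vvec N A B k \<theta> i))"
    by (metis zvec_eq_prod_vvec)
  show "\<forall>i\<in>{1..N}. \<exists>q :: complex poly. degree q \<le> 3 ^ (k - 1) \<and>
            (\<forall>\<theta>::real. zvec N A B k \<theta> i = poly q (complex_of_real \<theta>))"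
    using poly_fun_le_zvec unfolding poly_fun_le_def by blast
qed

end
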